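(* Let $\Omega$ be an infinite set and $0\leq k\leq i\leq j$ integers with $k<j$. If $k>0$, then in each of the graphs $\Gamma^\Omega_{i,j;k}$ and $\Gamma^\Omega_{i,j;\geq k}$ each bipart contains a finite set of vertices that have no common neighbour. In the graph $\Gamma^\Omega_{i,j;0}$, every finite set of vertices contained in one bipart has a common neighbour.
   Context: $\Gamma^\Omega_{i,j;k}$ is the bipartite graph with biparts the $i$-subsets and the $j$-subsets of $\Omega$ (two copies if $i=j$), an $i$-subset adjacent to a $j$-subset iff their intersection has exactly $k$ elements; $\Gamma^\Omega_{i,j;\geq k}$ is defined likewise with adjacency iff the intersection has at least $k$ elements. *)

theory Defs
  imports Main
begin

text \<open>When i = j the two biparts are two separate copies, which this representation
  models automatically since the sides are kept apart.\<close>
record 'v bigraph =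
  lpart :: "'v set"
  rpart :: "'v set"
  badj  :: "'v \<Rightarrow> 'v \<Rightarrow> bool"

definition subsets_card :: "'a set \<Rightarrow> nat \<Rightarrow> 'a set set" where
  "subsets_card \<Omega> n = {A. A \<subseteq> \<Omega> \<and> finite A \<and> card A = n}"

definition Gamma_eq :: "'a set \<Rightarrow> nat \<Rightarrow> nat \<Rightarrow> nat \<Rightarrow> 'a set bigraph" where
  "Gamma_eq \<Omega> i j k = \<lparr>lpart = subsets_card \<Omega> i, rpart = subsets_card \<Omega> j,
      badj = (\<lambda>A B. card (A \<inter> B) = k)\<rparr>"

definition Gamma_ge :: "'a set \<Rightarrow> nat \<Rightarrow> nat \<Rightarrow> nat \<Rightarrow> 'a set bigraph" where
  "Gamma_ge \<Omega> i j k = \<lparr>lpart = subsets_card \<Omega> i, rpart = subsets_card \<Omega> j,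
      badj = (\<lambda>A B. card (A \<inter> B) \<ge> k)\<rparr>"

definition common_nbr_L :: "('v, 'z) bigraph_scheme \<Rightarrow> 'v set \<Rightarrow> bool" where
  "common_nbr_L G S = (\<exists>B\<in>rpart G. \<forall>A\<in>S. badj G A B)"

definition common_nbr_R :: "('v, 'z) bigraph_scheme \<Rightarrow> 'v set \<Rightarrow> bool" where
  "common_nbr_R G T = (\<exists>A\<in>lpart G. \<forall>B\<in>T. badj G A B)"

end

theory Submission
  imports Defs
begin

text \<open>For \<open>k > 0\<close>, take \<open>t + 1\<close> pairwise disjoint \<open>s\<close>-subsets of \<open>\<Omega>\<close>: a \<open>t\<close>-set
  meeting each of them would contain \<open>t + 1\<close> distinct points, one from each, so some member
  of the family is disjoint from it and is not adjacent to it in either graph.  For \<open>k = 0\<close>,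
  finitely many finite sets cover only finitely many points of the infinite set \<open>\<Omega>\<close>, and any
  subset of the right size of the remaining points is a common neighbour.\<close>

lemma exists_subset_card_disjoint_from_finite_family:
  assumes "infinite \<Omega>" "finite S" "\<forall>A\<in>S. finite A"
  shows "\<exists>B\<in>subsets_card \<Omega> t. \<forall>A\<in>S. disjnt A B"
proof -
  have "finite (\<Union>S)"
    using assms(2,3) by blast
  then have "infinite (\<Omega> - \<Union>S)"
    using assms(1) by (rule Diff_infinite_finite)
  then obtain B where B: "finite B" "card B = t" "B \<subseteq> \<Omega> - \<Union>S"
    using infinite_arbitrarily_large by blast
  then have "B \<in> subsets_card \<Omega> t"
    unfolding subsets_card_def by blast
  moreover have "\<forall>A\<in>S. disjnt A B"
    using B(3) unfolding disjnt_def by blast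
  ultimately show ?thesis by blast
qed

lemma exists_pairwise_disjoint_subsets_card:
  assumes "infinite \<Omega>" "0 < s"
  shows "\<exists>F \<subseteq> subsets_card \<Omega> s. finite F \<and> card F = n \<and> pairwise disjnt F"
proof (induction n)
  case 0
  show ?case by auto
next
  case (Suc n)
  then obtain F where F: "F \<subseteq> subsets_card \<Omega> s" "finite F" "card F = n" "pairwise disjnt F"
    by blast
  have "\<forall>A\<in>F. finite A"
    using F(1) unfolding subsets_card_def by blast
  then obtain B where B: "B \<in> subsets_card \<Omega> s" "\<forall>A\<in>F. disjnt A B"
    using exists_subset_card_disjoint_from_finite_family[OF assms(1) F(2)] by blast
  have "card B = s"
    using B(1) by (simp add: subsets_card_def)
  then have "B \<notin> F"
    using B(2) assms(2) by fastforce
  then have "card (insert B F) = Suc n"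
    using F(2,3) by simp
  moreover have "pairwise disjnt (insert B F)"
    using F(4) B(2) by (auto simp: pairwise_insert disjnt_sym)
  ultimately show ?case
    using F(1,2) B(1) by (intro exI[of _ "insert B F"]) simp
qed

lemma card_le_if_meets_pairwise_disjoint:
  assumes "finite B" "pairwise disjnt F" "\<forall>A\<in>F. A \<inter> B \<noteq> {}"
  shows "card F \<le> card B"
proof -
  define pick where "pick A = (SOME x. x \<in> A \<inter> B)" for A
  have pick: "pick A \<in> A \<inter> B" if "A \<in> F" for A
    unfolding pick_def using assms(3) that by (metis ex_in_conv someI_ex)
  have "inj_on pick F"
  proof (rule inj_onI)
    fix A A' assume "A \<in> F" "A' \<in> F" "pick A = pick A'"
    then have "\<not> disjnt A A'"
      using pick by (metis IntE disjnt_iff)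
    then show "A = A'"
      using assms(2) \<open>A \<in> F\<close> \<open>A' \<in> F\<close> by (meson pairwiseD)
  qed
  moreover have "pick ` F \<subseteq> B"
    using pick by blast
  ultimately show ?thesis
    using card_inj_on_le assms(1) by blast
qed

lemma finite_family_without_transversal:
  assumes "infinite \<Omega>" "0 < s"
  shows "\<exists>S \<subseteq> subsets_card \<Omega> s. finite S \<and> (\<forall>B\<in>subsets_card \<Omega> t. \<exists>A\<in>S. disjnt A B)"
proof -
  obtain F where F: "F \<subseteq> subsets_card \<Omega> s" "finite F" "card F = Suc t" "pairwise disjnt F"
    using exists_pairwise_disjoint_subsets_card[OF assms] by blast
  have "\<exists>A\<in>F. disjnt A B" if "B \<in> subsets_card \<Omega> t" for B
  proof (rule ccontr)
    assume "\<not> (\<exists>A\<in>F. disjnt A B)"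
    then have "card F \<le> card B"
      using that F(4) by (intro card_le_if_meets_pairwise_disjoint)
        (auto simp: subsets_card_def disjnt_def)
    then show False
      using that F(3) by (simp add: subsets_card_def)
  qed
  then show ?thesis
    using F by blast
qed

lemma Gamma_parts:
  assumes "G \<in> {Gamma_eq \<Omega> i j k, Gamma_ge \<Omega> i j k}"
  shows "lpart G = subsets_card \<Omega> i" "rpart G = subsets_card \<Omega> j"
  using assms by (auto simp: Gamma_eq_def Gamma_ge_def)

lemma Gamma_adjacent_imp_not_disjnt:
  assumes "0 < k" "G \<in> {Gamma_eq \<Omega> i j k, Gamma_ge \<Omega> i j k}" "badj G A B"
  shows "\<not> disjnt A B"
  using assms by (auto simp: Gamma_eq_def Gamma_ge_def disjnt_def)

lemma Gamma_exists_finite_left_without_common_nbr: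
  assumes "infinite \<Omega>" "0 < k" "k \<le> i" "G \<in> {Gamma_eq \<Omega> i j k, Gamma_ge \<Omega> i j k}"
  shows "\<exists>S \<subseteq> lpart G. finite S \<and> \<not> common_nbr_L G S"
proof -
  obtain S where S: "S \<subseteq> subsets_card \<Omega> i" "finite S"
    "\<forall>B\<in>subsets_card \<Omega> j. \<exists>A\<in>S. disjnt A B"
    using finite_family_without_transversal[OF assms(1), of i j] assms(2,3) by auto
  have "\<not> common_nbr_L G S"
  proof
    assume "common_nbr_L G S"
    then obtain B where "B \<in> subsets_card \<Omega> j" "\<forall>A\<in>S. badj G A B"
      unfolding common_nbr_L_def Gamma_parts[OF assms(4)] by blast
    with S(3) Gamma_adjacent_imp_not_disjnt[OF assms(2,4)] show False
      by blast
  qed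
  then show ?thesis
    using S(1,2) Gamma_parts[OF assms(4)] by blast
qed

lemma Gamma_exists_finite_right_without_common_nbr:
  assumes "infinite \<Omega>" "0 < k" "k \<le> j" "G \<in> {Gamma_eq \<Omega> i j k, Gamma_ge \<Omega> i j k}"
  shows "\<exists>T \<subseteq> rpart G. finite T \<and> \<not> common_nbr_R G T"
proof -
  obtain T where T: "T \<subseteq> subsets_card \<Omega> j" "finite T"
    "\<forall>A\<in>subsets_card \<Omega> i. \<exists>B\<in>T. disjnt B A"
    using finite_family_without_transversal[OF assms(1), of j i] assms(2,3) by auto
  have "\<not> common_nbr_R G T"
  proof
    assume "common_nbr_R G T"
    then obtain A where "A \<in> subsets_card \<Omega> i" "\<forall>B\<in>T. badj G A B"
      unfolding common_nbr_R_def Gamma_parts[OF assms(4)] by blast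
    with T(3) obtain B where "disjnt B A" "badj G A B"
      by blast
    then show False
      using Gamma_adjacent_imp_not_disjnt[OF assms(2,4)] disjnt_sym by meson
  qed
  then show ?thesis
    using T(1,2) Gamma_parts[OF assms(4)] by blast
qed

lemma Gamma_eq_zero_common_nbr_L:
  assumes "infinite \<Omega>" "S \<subseteq> lpart (Gamma_eq \<Omega> i j 0)" "finite S"
  shows "common_nbr_L (Gamma_eq \<Omega> i j 0) S"
proof -
  obtain B where "B \<in> subsets_card \<Omega> j" "\<forall>A\<in>S. disjnt A B"
    using exists_subset_card_disjoint_from_finite_family[OF assms(1) assms(3), of j] assms(2)
    by (auto simp: Gamma_eq_def subsets_card_def)
  then have "B \<in> rpart (Gamma_eq \<Omega> i j 0)" "\<forall>A\<in>S. badj (Gamma_eq \<Omega> i j 0) A B"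
    by (simp_all add: Gamma_eq_def disjnt_def)
  then show ?thesis
    unfolding common_nbr_L_def by blast
qed

lemma Gamma_eq_zero_common_nbr_R:
  assumes "infinite \<Omega>" "T \<subseteq> rpart (Gamma_eq \<Omega> i j 0)" "finite T"
  shows "common_nbr_R (Gamma_eq \<Omega> i j 0) T"
proof -
  obtain A where "A \<in> subsets_card \<Omega> i" "\<forall>B\<in>T. disjnt B A"
    using exists_subset_card_disjoint_from_finite_family[OF assms(1) assms(3), of i] assms(2)
    by (auto simp: Gamma_eq_def subsets_card_def)
  then have "A \<in> lpart (Gamma_eq \<Omega> i j 0)" "\<forall>B\<in>T. badj (Gamma_eq \<Omega> i j 0) A B"
    by (simp_all add: Gamma_eq_def disjnt_def Int_commute)
  then show ?thesis
    unfolding common_nbr_R_def by blast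
qed

theorem lemma4p4:
  fixes \<Omega> :: "'a set" and i j k :: nat
  assumes "infinite \<Omega>" and "k \<le> i" and "i \<le> j" and "k < j"
  shows "(k > 0 \<longrightarrow>
            (\<forall>G \<in> {Gamma_eq \<Omega> i j k, Gamma_ge \<Omega> i j k}.
               (\<exists>S \<subseteq> lpart G. finite S \<and> \<not> common_nbr_L G S) \<and>
               (\<exists>T \<subseteq> rpart G. finite T \<and> \<not> common_nbr_R G T)))
       \<and> (\<forall>S \<subseteq> lpart (Gamma_eq \<Omega> i j 0). finite S \<longrightarrow> common_nbr_L (Gamma_eq \<Omega> i j 0) S)
       \<and> (\<forall>T \<subseteq> rpart (Gamma_eq \<Omega> i j 0). finite T \<longrightarrow> common_nbr_R (Gamma_eq \<Omega> i j 0) T)"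
proof (intro conjI impI ballI allI)
  fix G assume "k > 0" and G: "G \<in> {Gamma_eq \<Omega> i j k, Gamma_ge \<Omega> i j k}"
  show "\<exists>S \<subseteq> lpart G. finite S \<and> \<not> common_nbr_L G S"
    by (rule Gamma_exists_finite_left_without_common_nbr[OF assms(1) \<open>k > 0\<close> assms(2) G])
  have "k \<le> j"
    using assms(2,3) by linarith
  then show "\<exists>T \<subseteq> rpart G. finite T \<and> \<not> common_nbr_R G T"
    by (rule Gamma_exists_finite_right_without_common_nbr[OF assms(1) \<open>k > 0\<close> _ G])
next
  fix S assume "S \<subseteq> lpart (Gamma_eq \<Omega> i j 0)" "finite S"
  then show "common_nbr_L (Gamma_eq \<Omega> i j 0) S"
    by (rule Gamma_eq_zero_common_nbr_L[OF assms(1)])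
next
  fix T assume "T \<subseteq> rpart (Gamma_eq \<Omega> i j 0)" "finite T"
  then show "common_nbr_R (Gamma_eq \<Omega> i j 0) T"
    by (rule Gamma_eq_zero_common_nbr_R[OF assms(1)])
qed

end
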